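(* CBS-DL is complete and optimal: on every MAPF-DL instance, and for every choice of tie-breaking, of collisions selected for branching, and of paths returned by the low-level search, CBS-DL terminates and returns a solution whose number of unsuccessful agents is the minimum over all solutions of the instance.
   Context: MAPF-DL. An instance consists of a deadline $T_{\mathrm{end}}\in\mathbb{N}$, a finite undirected graph $G=(V,E)$, and $M$ agents $a_1,\dots,a_M$; agent $a_i$ has a start vertex $s_i$ and a goal vertex $g_i$, and the graph distance from $s_i$ to $g_i$ is at most $T_{\mathrm{end}}$. A path for $a_i$ is a map $l_i:\{0,\dots,T_{\mathrm{end}}\}\to V$ with $l_i(0)=s_i$, $l_i(T_{\mathrm{end}})=g_i$, and for each $t\ge1$ either $(l_i(t-1),l_i(t))\in E$ or $l_i(t-1)=l_i(t)$. A plan assigns a path to each agent of some subset (the successful agents); the others are unsuccessful and get no path. Two distinct successful agents $a_i,a_j$ have a vertex collision $(a_i,a_j,v,t)$ if $l_i(t)=l_j(t)=v$, and an edge collision $(a_i,a_j,u,v,t)$ if $u=l_i(t)=l_j(t+1)$ and $v=l_j(t)=l_i(t+1)$. A solution is a plan with no collisions; its cost is the number of unsuccessful agents. Constraints: a vertex constraint $(a_i,v,t)$ forbids $l_i(t)=v$; an edge constraint $(a_i,u,v,t)$ forbids $l_i(t)=u$ together with $l_i(t+1)=v$. A path for $a_i$ obeys a constraint set $C$ if it violates none of the constraints in $C$ concerning $a_i$. Algorithm CBS-DL. Low-level search: given agent $a_i$ and constraint set $C$, it returns some path for $a_i$ obeying $C$ if one exists, and otherwise returns "no path". The high level performs best-first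 search over a constraint tree (CT); each CT node $N$ has a constraint set $N.C$, a plan $N.\mathrm{plan}$, and cost $N.\mathrm{cost}$ = number of agents without a path in $N.\mathrm{plan}$. The root has $C=\emptyset$ and the plan containing a low-level path for every agent (cost $0$). OPEN initially contains the root. Repeat: remove from OPEN a node $N$ of minimum cost (ties arbitrary). If $N.\mathrm{plan}$ has no collision, return it. Otherwise pick some collision in $N.\mathrm{plan}$. For a vertex collision $(a_i,a_j,v,t)$ create two children: one with constraints $N.C\cup\{(a_i,v,t)\}$ and one with $N.C\cup\{(a_j,v,t)\}$; for an edge collision $(a_i,a_j,u,v,t)$ the children get $N.C\cup\{(a_i,u,v,t)\}$ and $N.C\cup\{(a_j,v,u,t)\}$, respectively. Each child copies $N.\mathrm{plan}$, and then the path of the agent named in its new constraint is replaced by the low-level search result for that agent under the child's constraint set (the agent's path is deleted if "no path" is returned); the child's cost is recomputed and the child is inserted into OPEN. *)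

theory Defs
  imports "HOL-Library.Multiset"
begin

text \<open>An instance: deadline, finite undirected graph (V,E) with E a symmetric
  relation on V, number of agents M (agents are indexed 0..M-1), start and goal maps.\<close>

record 'v mapf_inst =
  Tend :: nat
  Vs   :: "'v set"
  Es   :: "('v \<times> 'v) set"
  nag  :: nat
  st   :: "nat \<Rightarrow> 'v"
  gl   :: "nat \<Rightarrow> 'v"

definition dist_le :: "'v mapf_inst \<Rightarrow> 'v \<Rightarrow> 'v \<Rightarrow> nat \<Rightarrow> bool" where
  "dist_le I u v n \<longleftrightarrow> (\<exists>xs. xs \<noteq> [] \<and> hd xs = u \<and> last xs = v \<and> length xs \<le> Suc n \<and>
      set xs \<subseteq> Vs I \<and> (\<forall>k. Suc k < length xs \<longrightarrow> (xs ! k, xs ! Suc k) \<in> Es I))"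

definition valid_inst :: "'v mapf_inst \<Rightarrow> bool" where
  "valid_inst I \<longleftrightarrow> finite (Vs I) \<and> Es I \<subseteq> Vs I \<times> Vs I \<and> sym (Es I) \<and>
     (\<forall>i < nag I. st I i \<in> Vs I \<and> gl I i \<in> Vs I \<and> dist_le I (st I i) (gl I i) (Tend I))"

text \<open>A path is a map from times to vertices; only the values at times 0..T_end matter.\<close>
type_synonym 'v path = "nat \<Rightarrow> 'v"
type_synonym 'v plan = "nat \<Rightarrow> 'v path option"

definition is_path :: "'v mapf_inst \<Rightarrow> nat \<Rightarrow> 'v path \<Rightarrow> bool" where
  "is_path I i l \<longleftrightarrow> l 0 = st I i \<and> l (Tend I) = gl I i \<and>
     (\<forall>t \<le> Tend I. l t \<in> Vs I) \<and>
     (\<forall>t. 1 \<le> t \<and> t \<le> Tend I \<longrightarrow> (l (t - 1), l t) \<in> Es I \<or> l (t - 1) = l t)"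

text \<open>A plan assigns paths to a subset of the agents (None = unsuccessful).\<close>
definition is_plan :: "'v mapf_inst \<Rightarrow> 'v plan \<Rightarrow> bool" where
  "is_plan I P \<longleftrightarrow> (\<forall>i < nag I. \<forall>l. P i = Some l \<longrightarrow> is_path I i l) \<and>
                   (\<forall>i \<ge> nag I. P i = None)"

definition plan_cost :: "'v mapf_inst \<Rightarrow> 'v plan \<Rightarrow> nat" where
  "plan_cost I P = card {i. i < nag I \<and> P i = None}"

datatype 'v collision =
    VColl nat nat 'v nat
  | EColl nat nat 'v 'v nat

fun is_collision :: "'v mapf_inst \<Rightarrow> 'v plan \<Rightarrow> 'v collision \<Rightarrow> bool" where
  "is_collision I P (VColl i j v t) \<longleftrightarrow>
     i < nag I \<and> j < nag I \<and> i \<noteq> j \<and> t \<le> Tend I \<and>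
     (\<exists>li lj. P i = Some li \<and> P j = Some lj \<and> li t = v \<and> lj t = v)"
| "is_collision I P (EColl i j u v t) \<longleftrightarrow>
     i < nag I \<and> j < nag I \<and> i \<noteq> j \<and> t < Tend I \<and>
     (\<exists>li lj. P i = Some li \<and> P j = Some lj \<and>
        u = li t \<and> u = lj (Suc t) \<and> v = lj t \<and> v = li (Suc t))"

definition collision_free :: "'v mapf_inst \<Rightarrow> 'v plan \<Rightarrow> bool" where
  "collision_free I P \<longleftrightarrow> (\<forall>c. \<not> is_collision I P c)"

definition is_solution :: "'v mapf_inst \<Rightarrow> 'v plan \<Rightarrow> bool" where
  "is_solution I P \<longleftrightarrow> is_plan I P \<and> collision_free I P"

datatype 'v constr =
    VCon nat 'v nat
  | ECon nat 'v 'v nat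

fun violates :: "nat \<Rightarrow> 'v path \<Rightarrow> 'v constr \<Rightarrow> bool" where
  "violates i l (VCon k v t) \<longleftrightarrow> k = i \<and> l t = v"
| "violates i l (ECon k u v t) \<longleftrightarrow> k = i \<and> l t = u \<and> l (Suc t) = v"

definition obeys :: "nat \<Rightarrow> 'v path \<Rightarrow> 'v constr set \<Rightarrow> bool" where
  "obeys i l C \<longleftrightarrow> (\<forall>c \<in> C. \<not> violates i l c)"

fun constr_agent :: "'v constr \<Rightarrow> nat" where
  "constr_agent (VCon k _ _) = k"
| "constr_agent (ECon k _ _ _) = k"

text \<open>Possible results of the low-level search for agent i under C (any obeying path;
  "no path" (None) exactly when no obeying path exists).\<close>
definition low_level_result :: "'v mapf_inst \<Rightarrow> nat \<Rightarrow> 'v constr set \<Rightarrow> 'v path option \<Rightarrow> bool" where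
  "low_level_result I i C r \<longleftrightarrow>
     (case r of Some l \<Rightarrow> is_path I i l \<and> obeys i l C
              | None \<Rightarrow> \<not> (\<exists>l. is_path I i l \<and> obeys i l C))"

type_synonym 'v ct_node = "'v constr set \<times> 'v plan"

definition node_cost :: "'v mapf_inst \<Rightarrow> 'v ct_node \<Rightarrow> nat" where
  "node_cost I N = plan_cost I (snd N)"

definition root_node :: "'v mapf_inst \<Rightarrow> 'v ct_node \<Rightarrow> bool" where
  "root_node I N \<longleftrightarrow> fst N = {} \<and>
     (\<forall>i < nag I. \<exists>l. snd N i = Some l \<and> low_level_result I i {} (Some l)) \<and>
     (\<forall>i \<ge> nag I. snd N i = None)"

definition child_node :: "'v mapf_inst \<Rightarrow> 'v ct_node \<Rightarrow> 'v constr \<Rightarrow> 'v ct_node \<Rightarrow> bool" where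
  "child_node I N c N' \<longleftrightarrow>
     (\<exists>r. low_level_result I (constr_agent c) (insert c (fst N)) r \<and>
          N' = (insert c (fst N), (snd N)(constr_agent c := r)))"

fun branch_constrs :: "'v collision \<Rightarrow> 'v constr \<times> 'v constr" where
  "branch_constrs (VColl i j v t) = (VCon i v t, VCon j v t)"
| "branch_constrs (EColl i j u v t) = (ECon i u v t, ECon j v u t)"

datatype 'v cbs_state = Search "'v ct_node multiset" | Return "'v plan"

text \<open>One iteration of the main loop; all choices (tie-breaking among minimum-cost
  nodes, the collision, the low-level paths) are nondeterministic.\<close>
inductive cbs_step :: "'v mapf_inst \<Rightarrow> 'v cbs_state \<Rightarrow> 'v cbs_state \<Rightarrow> bool" for I where
  ret: "\<lbrakk> N \<in># OPEN; \<forall>N' \<in># OPEN. node_cost I N \<le> node_cost I N';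
          collision_free I (snd N) \<rbrakk>
        \<Longrightarrow> cbs_step I (Search OPEN) (Return (snd N))"
| expand: "\<lbrakk> N \<in># OPEN; \<forall>N' \<in># OPEN. node_cost I N \<le> node_cost I N';
          is_collision I (snd N) coll; branch_constrs coll = (c1, c2);
          child_node I N c1 N1; child_node I N c2 N2 \<rbrakk>
        \<Longrightarrow> cbs_step I (Search OPEN) (Search (OPEN - {#N#} + {#N1, N2#}))"

end

theory Submission
  imports Defs
begin

text \<open>Invariant: every node in OPEN is consistent (each agent's entry is a legal low-level
  result for the node's constraints), and every solution obeys the constraints of some node in
  OPEN.  Branching on a collision keeps the second part, because a collision-free plan cannot
  violate both branch constraints; and a consistent node's plan is optimal among the plans
  obeying its constraints, so the cheapest node in OPEN costs at most any solution.
  Termination: all constraints ever added mention a real agent, a vertex and a time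
  \<open>\<le> T_end\<close>, so there are finitely many, and each expansion replaces a node by two nodes with
  strictly more constraints; the multiset of the numbers of missing constraints decreases.\<close>

definition relevant_constrs :: "'v mapf_inst \<Rightarrow> 'v constr set" where
  "relevant_constrs I = {c. case c of
       VCon k v t \<Rightarrow> k < nag I \<and> v \<in> Vs I \<and> t \<le> Tend I
     | ECon k u v t \<Rightarrow> k < nag I \<and> u \<in> Vs I \<and> v \<in> Vs I \<and> t \<le> Tend I}"

lemma finite_relevant_constrs:
  assumes "finite (Vs I)"
  shows "finite (relevant_constrs I)"
proof -
  let ?A = "(\<lambda>(k, v, t). VCon k v t) ` ({..<nag I} \<times> Vs I \<times> {..Tend I})"
  let ?B = "(\<lambda>(k, u, v, t). ECon k u v t) ` ({..<nag I} \<times> Vs I \<times> Vs I \<times> {..Tend I})"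
  have "relevant_constrs I \<subseteq> ?A \<union> ?B"
  proof
    fix c assume "c \<in> relevant_constrs I"
    then show "c \<in> ?A \<union> ?B" by (cases c) (force simp: relevant_constrs_def)+
  qed
  moreover have "finite (?A \<union> ?B)" using assms by auto
  ultimately show ?thesis by (rule finite_subset)
qed

definition plan_obeys :: "'v plan \<Rightarrow> 'v constr set \<Rightarrow> bool" where
  "plan_obeys Q C \<longleftrightarrow> (\<forall>i l. Q i = Some l \<longrightarrow> obeys i l C)"

lemma plan_obeys_insertI:
  "plan_obeys Q {c} \<Longrightarrow> plan_obeys Q C \<Longrightarrow> plan_obeys Q (insert c C)"
  by (auto simp: plan_obeys_def obeys_def)

lemma low_level_result_insert_other_agent:
  assumes "constr_agent c \<noteq> i"
  shows "low_level_result I i (insert c C) r \<longleftrightarrow> low_level_result I i C r"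
proof -
  have "\<not> violates i l c" for l using assms by (cases c) auto
  then have "obeys i l (insert c C) \<longleftrightarrow> obeys i l C" for l by (simp add: obeys_def)
  then show ?thesis by (simp add: low_level_result_def split: option.split)
qed

definition consistent_node :: "'v mapf_inst \<Rightarrow> 'v ct_node \<Rightarrow> bool" where
  "consistent_node I N \<longleftrightarrow> fst N \<subseteq> relevant_constrs I \<and>
     (\<forall>i < nag I. low_level_result I i (fst N) (snd N i)) \<and> (\<forall>i \<ge> nag I. snd N i = None)"

lemma consistent_node_Some:
  "consistent_node I N \<Longrightarrow> i < nag I \<Longrightarrow> snd N i = Some l \<Longrightarrow> is_path I i l \<and> obeys i l (fst N)"
  unfolding consistent_node_def low_level_result_def by force

lemma consistent_node_None:
  "consistent_node I N \<Longrightarrow> i < nag I \<Longrightarrow> snd N i = None \<Longrightarrow> \<not> is_path I i l \<or> \<not> obeys i l (fst N)"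
  unfolding consistent_node_def low_level_result_def by force

lemma consistent_node_is_plan: "consistent_node I N \<Longrightarrow> is_plan I (snd N)"
  unfolding is_plan_def using consistent_node_Some[of I N] by (auto simp: consistent_node_def)

lemma root_node_consistent: "root_node I R \<Longrightarrow> consistent_node I R"
  unfolding root_node_def consistent_node_def by (metis empty_subsetI)

lemma child_node_consistent:
  assumes "consistent_node I N" "c \<in> relevant_constrs I" "child_node I N c N'"
  shows "consistent_node I N'"
proof -
  obtain r where r: "low_level_result I (constr_agent c) (insert c (fst N)) r"
    and N': "N' = (insert c (fst N), (snd N)(constr_agent c := r))"
    using assms(3) unfolding child_node_def by blast
  have agent: "constr_agent c < nag I"
    using assms(2) by (cases c) (auto simp: relevant_constrs_def)
  have "low_level_result I i (insert c (fst N)) (((snd N)(constr_agent c := r)) i)"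
    if "i < nag I" for i
  proof (cases "i = constr_agent c")
    case True
    with r show ?thesis by simp
  next
    case False
    with that assms(1) show ?thesis
      by (simp add: low_level_result_insert_other_agent consistent_node_def)
  qed
  moreover have "((snd N)(constr_agent c := r)) i = None" if "i \<ge> nag I" for i
    using that agent assms(1) by (simp add: consistent_node_def)
  ultimately show ?thesis
    using assms(1,2) unfolding N' consistent_node_def by simp
qed

lemma existing_child_node: "\<exists>N'. child_node I N c N'"
proof -
  let ?C = "insert c (fst N)" and ?i = "constr_agent c"
  have "\<exists>r. low_level_result I ?i ?C r"
  proof (cases "\<exists>l. is_path I ?i l \<and> obeys ?i l ?C")
    case True
    then obtain l where "is_path I ?i l \<and> obeys ?i l ?C" by blast
    then show ?thesis by (intro exI[of _ "Some l"]) (simp add: low_level_result_def)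
  next
    case False
    then show ?thesis by (intro exI[of _ None]) (simp add: low_level_result_def)
  qed
  then show ?thesis unfolding child_node_def by blast
qed

text \<open>A consistent node's plan leaves unsuccessful only agents that have no path at all
  obeying its constraints.\<close>

lemma node_cost_le_plan_cost:
  assumes N: "consistent_node I N" and Q: "is_plan I Q" "plan_obeys Q (fst N)"
  shows "node_cost I N \<le> plan_cost I Q"
proof -
  have "{i. i < nag I \<and> snd N i = None} \<subseteq> {i. i < nag I \<and> Q i = None}"
  proof (intro subsetI CollectI conjI)
    fix i assume i: "i \<in> {i. i < nag I \<and> snd N i = None}"
    then show "i < nag I" by simp
    show "Q i = None"
    proof (rule ccontr)
      assume "Q i \<noteq> None"
      then obtain l where "Q i = Some l" by blast
      with i Q have "is_path I i l" "obeys i l (fst N)"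
        by (auto simp: is_plan_def plan_obeys_def)
      with i show False using consistent_node_None[OF N] by blast
    qed
  qed
  then show ?thesis unfolding node_cost_def plan_cost_def by (intro card_mono) auto
qed

lemma solution_obeys_branch_constr:
  assumes free: "collision_free I Q" and coll: "is_collision I P coll"
    and bc: "branch_constrs coll = (c1, c2)"
  shows "plan_obeys Q {c1} \<or> plan_obeys Q {c2}"
proof (rule ccontr)
  assume "\<not> (plan_obeys Q {c1} \<or> plan_obeys Q {c2})"
  then obtain k1 l1 k2 l2 where
    "Q k1 = Some l1" "violates k1 l1 c1" "Q k2 = Some l2" "violates k2 l2 c2"
    by (auto simp: plan_obeys_def obeys_def)
  with coll bc have "is_collision I Q coll" by (cases coll) auto
  with free show False by (simp add: collision_free_def)
qed

text \<open>The paths in collision violate the branch constraints, so these are new to the node;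
  they are relevant because the paths stay in \<open>Vs I\<close>.\<close>

lemma branch_constrs_fresh:
  assumes N: "consistent_node I N" and coll: "is_collision I (snd N) coll"
    and bc: "branch_constrs coll = (c1, c2)"
  shows "c1 \<in> relevant_constrs I - fst N" "c2 \<in> relevant_constrs I - fst N"
proof -
  have "c1 \<in> relevant_constrs I - fst N \<and> c2 \<in> relevant_constrs I - fst N"
  proof (cases coll)
    case (VColl i j v t)
    with coll obtain li lj where "i < nag I" "j < nag I" "t \<le> Tend I"
      "snd N i = Some li" "snd N j = Some lj" "li t = v" "lj t = v" by auto
    moreover from this have "is_path I i li \<and> obeys i li (fst N)" "is_path I j lj \<and> obeys j lj (fst N)"
      using consistent_node_Some[OF N] by blast+
    ultimately show ?thesis using bc VColl
      by (auto simp: relevant_constrs_def is_path_def obeys_def)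
  next
    case (EColl i j u v t)
    with coll obtain li lj where "i < nag I" "j < nag I" "t < Tend I"
      "snd N i = Some li" "snd N j = Some lj"
      "u = li t" "u = lj (Suc t)" "v = lj t" "v = li (Suc t)" by auto
    moreover from this have "is_path I i li \<and> obeys i li (fst N)" "is_path I j lj \<and> obeys j lj (fst N)"
      using consistent_node_Some[OF N] by blast+
    ultimately show ?thesis using bc EColl
      by (auto simp: relevant_constrs_def is_path_def obeys_def)
  qed
  then show "c1 \<in> relevant_constrs I - fst N" "c2 \<in> relevant_constrs I - fst N" by blast+
qed

definition optimal_solution :: "'v mapf_inst \<Rightarrow> 'v plan \<Rightarrow> bool" where
  "optimal_solution I P \<longleftrightarrow> is_solution I P \<and> (\<forall>Q. is_solution I Q \<longrightarrow> plan_cost I P \<le> plan_cost I Q)"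

definition covers_solutions :: "'v mapf_inst \<Rightarrow> 'v ct_node multiset \<Rightarrow> bool" where
  "covers_solutions I OPEN \<longleftrightarrow> (\<forall>Q. is_solution I Q \<longrightarrow> (\<exists>N \<in># OPEN. plan_obeys Q (fst N)))"

fun cbs_invariant :: "'v mapf_inst \<Rightarrow> 'v cbs_state \<Rightarrow> bool" where
  "cbs_invariant I (Search OPEN) \<longleftrightarrow>
     OPEN \<noteq> {#} \<and> (\<forall>N \<in># OPEN. consistent_node I N) \<and> covers_solutions I OPEN"
| "cbs_invariant I (Return P) \<longleftrightarrow> optimal_solution I P"

lemma root_invariant: "root_node I R \<Longrightarrow> cbs_invariant I (Search {#R#})"
  by (simp add: root_node_consistent covers_solutions_def plan_obeys_def obeys_def root_node_def)

lemma min_cost_node_optimal: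
  assumes "\<forall>N' \<in># OPEN. consistent_node I N'" "covers_solutions I OPEN"
    and "\<forall>N' \<in># OPEN. node_cost I N \<le> node_cost I N'"
    and "is_solution I Q"
  shows "node_cost I N \<le> plan_cost I Q"
proof -
  obtain N' where N': "N' \<in># OPEN" "plan_obeys Q (fst N')"
    using assms(2,4) by (auto simp: covers_solutions_def)
  with assms(1,4) have "node_cost I N' \<le> plan_cost I Q"
    by (simp add: node_cost_le_plan_cost is_solution_def)
  moreover have "node_cost I N \<le> node_cost I N'" using assms(3) N'(1) by simp
  ultimately show ?thesis by simp
qed

lemma covers_solutions_expand:
  assumes cov: "covers_solutions I OPEN"
    and coll: "is_collision I (snd N) coll" and bc: "branch_constrs coll = (c1, c2)"
    and N1: "child_node I N c1 N1" and N2: "child_node I N c2 N2"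
  shows "covers_solutions I (OPEN - {#N#} + {#N1, N2#})"
  unfolding covers_solutions_def
proof (intro allI impI)
  fix Q assume Q: "is_solution I Q"
  then obtain N' where N': "N' \<in># OPEN" "plan_obeys Q (fst N')"
    using cov by (auto simp: covers_solutions_def)
  show "\<exists>M \<in># OPEN - {#N#} + {#N1, N2#}. plan_obeys Q (fst M)"
  proof (cases "N' = N")
    case True
    have "fst N1 = insert c1 (fst N)" "fst N2 = insert c2 (fst N)"
      using N1 N2 by (auto simp: child_node_def)
    moreover have "plan_obeys Q {c1} \<or> plan_obeys Q {c2}"
      using Q solution_obeys_branch_constr[OF _ coll bc] by (simp add: is_solution_def)
    ultimately show ?thesis using N' True by (auto intro: plan_obeys_insertI)
  next
    case False
    with N' show ?thesis by (auto simp: in_diff_count)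
  qed
qed

lemma cbs_step_invariant:
  assumes step: "cbs_step I S S'" and inv: "cbs_invariant I S"
  shows "cbs_invariant I S'"
  using step
proof cases
  case (ret N OPEN)
  with inv have "consistent_node I N" by auto
  moreover have "node_cost I N \<le> plan_cost I Q" if "is_solution I Q" for Q
    using min_cost_node_optimal[of OPEN I N Q] ret inv that by simp
  ultimately show ?thesis using ret
    by (auto simp: optimal_solution_def is_solution_def consistent_node_is_plan node_cost_def)
next
  case (expand N OPEN coll c1 c2 N1 N2)
  with inv have N: "consistent_node I N" by auto
  note fresh = branch_constrs_fresh[OF N expand(5,6)]
  have "consistent_node I N1" "consistent_node I N2"
    using child_node_consistent[OF N] fresh expand(7,8) by blast+
  moreover have "covers_solutions I (OPEN - {#N#} + {#N1, N2#})"
    using covers_solutions_expand[OF _ expand(5-8)] expand(1) inv by simp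
  moreover have "\<forall>M \<in># OPEN - {#N#}. consistent_node I M"
    using expand(1) inv by (auto dest: in_diffD)
  ultimately show ?thesis using expand(2) by simp
qed

lemma cbs_reachable_invariant:
  "(cbs_step I)\<^sup>*\<^sup>* S S' \<Longrightarrow> cbs_invariant I S \<Longrightarrow> cbs_invariant I S'"
  by (induction rule: rtranclp_induct) (simp_all add: cbs_step_invariant)

lemma cbs_invariant_progress:
  assumes "cbs_invariant I (Search OPEN)"
  shows "\<exists>S'. cbs_step I (Search OPEN) S'"
proof -
  from assms have "node_cost I ` set_mset OPEN \<noteq> {}" by simp
  then have "Min (node_cost I ` set_mset OPEN) \<in> node_cost I ` set_mset OPEN"
    by (intro Min_in) simp_all
  then obtain N where N: "N \<in># OPEN" "node_cost I N = Min (node_cost I ` set_mset OPEN)"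
    by auto
  then have min: "\<forall>N' \<in># OPEN. node_cost I N \<le> node_cost I N'" by simp
  show ?thesis
  proof (cases "collision_free I (snd N)")
    case True
    then show ?thesis using cbs_step.ret[OF N(1) min] by blast
  next
    case False
    then obtain coll where coll: "is_collision I (snd N) coll" by (auto simp: collision_free_def)
    obtain c1 c2 where bc: "branch_constrs coll = (c1, c2)" by fastforce
    obtain N1 N2 where "child_node I N c1 N1" "child_node I N c2 N2"
      using existing_child_node by blast
    then show ?thesis using cbs_step.expand[OF N(1) min coll bc] by blast
  qed
qed

lemma cbs_final_state:
  "cbs_invariant I S \<Longrightarrow> \<nexists>S'. cbs_step I S S' \<Longrightarrow> \<exists>P. S = Return P \<and> optimal_solution I P"
  by (cases S) (simp_all add: cbs_invariant_progress)

definition missing_constrs :: "'v mapf_inst \<Rightarrow> 'v ct_node \<Rightarrow> nat" where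
  "missing_constrs I N = card (relevant_constrs I) - card (fst N)"

lemma cbs_step_decreases:
  assumes fin: "finite (relevant_constrs I)"
    and step: "cbs_step I (Search OPEN) (Search OPEN')" and inv: "cbs_invariant I (Search OPEN)"
  shows "(image_mset (missing_constrs I) OPEN', image_mset (missing_constrs I) OPEN)
           \<in> mult1 less_than"
  using step
proof cases
  case (expand N coll c1 c2 N1 N2)
  with inv have N: "consistent_node I N" by auto
  note fresh = branch_constrs_fresh[OF N expand(4,5)]
  have sub: "fst N \<subseteq> relevant_constrs I" using N by (simp add: consistent_node_def)
  then have "finite (fst N)" using fin finite_subset by blast
  moreover have "fst N1 = insert c1 (fst N)" "fst N2 = insert c2 (fst N)"
    using expand(6,7) by (auto simp: child_node_def)
  moreover have "card (fst N) < card (relevant_constrs I)"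
    using fresh sub fin by (intro psubset_card_mono) auto
  ultimately have less: "missing_constrs I N1 < missing_constrs I N"
    "missing_constrs I N2 < missing_constrs I N"
    using fresh by (auto simp: missing_constrs_def)
  obtain rest where rest: "OPEN = add_mset N rest" using expand(2) by (metis multi_member_split)
  show ?thesis
    unfolding mult1_def expand(1) rest using less
    by (intro CollectI case_prodI exI[of _ "missing_constrs I N"]
        exI[of _ "image_mset (missing_constrs I) rest"]
        exI[of _ "{#missing_constrs I N1, missing_constrs I N2#}"]) auto
qed

lemma cbs_no_infinite_run:
  assumes fin: "finite (relevant_constrs I)" and inv: "cbs_invariant I (f 0)"
    and run: "\<forall>n. cbs_step I (f n) (f (Suc n))"
  shows False
proof -
  have inv_n: "cbs_invariant I (f n)" for n
    by (induction n) (use inv run cbs_step_invariant in auto)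
  define open_of where "open_of n = (case f n of Search OPEN \<Rightarrow> OPEN)" for n
  have open_of: "f n = Search (open_of n)" for n
    using run[rule_format, of n] by (cases "f n") (auto simp: open_of_def elim: cbs_step.cases)
  have "(image_mset (missing_constrs I) (open_of (Suc n)),
         image_mset (missing_constrs I) (open_of n)) \<in> mult1 less_than" for n
    using cbs_step_decreases[OF fin] run[rule_format, of n] inv_n[of n] by (simp only: open_of)
  then have "\<exists>g. \<forall>n. (g (Suc n), g n) \<in> mult1 less_than"
    by (intro exI[of _ "\<lambda>n. image_mset (missing_constrs I) (open_of n)"]) simp
  then show False
    using wf_mult1[OF wf_less_than] unfolding wf_iff_no_infinite_down_chain by blast
qed

theorem theorem2:
  fixes I :: "'v mapf_inst" and R :: "'v ct_node"
  assumes "valid_inst I" and "root_node I R"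
  shows "\<not> (\<exists>f. f 0 = Search {#R#} \<and> (\<forall>n. cbs_step I (f n) (f (Suc n)))) \<and>
         (\<forall>S. (cbs_step I)\<^sup>*\<^sup>* (Search {#R#}) S \<and> \<not> (\<exists>S'. cbs_step I S S') \<longrightarrow>
           (\<exists>P. S = Return P \<and> is_solution I P \<and>
                (\<forall>Q. is_solution I Q \<longrightarrow> plan_cost I P \<le> plan_cost I Q)))"
proof -
  have fin: "finite (relevant_constrs I)"
    using assms(1) by (simp add: valid_inst_def finite_relevant_constrs)
  have root: "cbs_invariant I (Search {#R#})" using assms(2) by (rule root_invariant)
  show ?thesis
  proof (intro conjI allI impI notI)
    assume "\<exists>f. f 0 = Search {#R#} \<and> (\<forall>n. cbs_step I (f n) (f (Suc n)))"
    then obtain f where f0: "f 0 = Search {#R#}" and run: "\<forall>n. cbs_step I (f n) (f (Suc n))"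
      by blast
    from root f0 have "cbs_invariant I (f 0)" by simp
    then show False using cbs_no_infinite_run[OF fin _ run] by blast
  next
    fix S assume "(cbs_step I)\<^sup>*\<^sup>* (Search {#R#}) S \<and> \<not> (\<exists>S'. cbs_step I S S')"
    then show "\<exists>P. S = Return P \<and> is_solution I P \<and>
                (\<forall>Q. is_solution I Q \<longrightarrow> plan_cost I P \<le> plan_cost I Q)"
      using cbs_final_state cbs_reachable_invariant[OF _ root] by (auto simp: optimal_solution_def)
  qed
qed

end
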